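(* Let $q$ be a prime power, $n\le m$ and $r\le\min\{n,m\}$. Let $\mathcal M$ be a set of $r$-dimensional subspaces of $\mathbb F_q^m$ with minimum subspace distance $d_{S,M}$, and let $\mathcal N$ be a set of $r$-dimensional subspaces of $\mathbb F_q^n$ with minimum subspace distance $d_{S,N}$. Then there exists a constant-rank code $\mathcal C$, i.e. a set of $m\times n$ matrices over $\mathbb F_q$ all of rank exactly $r$, of cardinality $\min\{|\mathcal M|,|\mathcal N|\}$, such that the column space of every element of $\mathcal C$ lies in $\mathcal M$ and the row space of every element of $\mathcal C$ lies in $\mathcal N$, and whose minimum rank distance $d_R$ satisfies $$d_R\ge\tfrac12 d_{S,M}+\tfrac12 d_{S,N};$$ and if moreover $|\mathcal M|=|\mathcal N|$, then additionally $d_R\le \tfrac12\min\{d_{S,M},d_{S,N}\}+r$.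
   Context: For subspaces $U,V$ of $\mathbb F_q^N$, the subspace distance is $d_S(U,V)=\dim(U+V)-\dim(U\cap V)$; the minimum subspace distance of a set of subspaces is the minimum of $d_S$ over pairs of distinct elements. The rank distance of two matrices $\mathbf X,\mathbf Y$ is $\mathrm{rk}(\mathbf X-\mathbf Y)$, and the minimum rank distance of a set of matrices is its minimum over distinct pairs. The column space of an $m\times n$ matrix is a subspace of $\mathbb F_q^m$, its row space a subspace of $\mathbb F_q^n$. *)

theory Defs
  imports "HOL-Analysis.Analysis" "HOL-Library.Extended_Nat"
begin

definition subspace_sum :: "('a::field^'k) set \<Rightarrow> ('a^'k) set \<Rightarrow> ('a^'k) set" where
  "subspace_sum U V = {u + v | u v. u \<in> U \<and> v \<in> V}"

definition subspace_dist :: "('a::field^'k) set \<Rightarrow> ('a^'k) set \<Rightarrow> nat" where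
  "subspace_dist U V = vec.dim (subspace_sum U V) - vec.dim (U \<inter> V)"

text \<open>Minimum distance, valued in enat; it is infinity for sets with fewer than two elements.\<close>
definition min_dist :: "('b \<Rightarrow> 'b \<Rightarrow> nat) \<Rightarrow> 'b set \<Rightarrow> enat" where
  "min_dist d S = (INF p \<in> {(x, y). x \<in> S \<and> y \<in> S \<and> x \<noteq> y}. enat (d (fst p) (snd p)))"

definition min_subspace_dist :: "('a::field^'k) set set \<Rightarrow> enat" where
  "min_subspace_dist S = min_dist subspace_dist S"

definition rank_dist :: "'a::field^'n^'m \<Rightarrow> 'a^'n^'m \<Rightarrow> nat" where
  "rank_dist X Y = rank (X - Y)"

definition min_rank_dist :: "('a::field^'n^'m) set \<Rightarrow> enat" where
  "min_rank_dist C = min_dist rank_dist C"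

definition col_space :: "'a::field^'n^'m \<Rightarrow> ('a^'m) set" where
  "col_space A = vec.span (columns A)"

definition row_space :: "'a::field^'n^'m \<Rightarrow> ('a^'n) set" where
  "row_space A = vec.span (rows A)"

end

theory Submission
  imports Defs
begin

text \<open>Pair off equally many subspaces \<open>U \<in> \<M>\<close> and \<open>V \<in> \<N>\<close> and realise each pair as the
  column and row space of a rank-\<open>r\<close> matrix \<open>C R\<close>, where the columns of \<open>C\<close> form a basis of
  \<open>U\<close> and the rows of \<open>R\<close> a basis of \<open>V\<close>. For two rank-\<open>r\<close> matrices \<open>X\<close>, \<open>Y\<close>, the matrix
  \<open>X\<close> maps the null space of \<open>X - Y\<close> into \<open>col X \<inter> col Y\<close> with kernel \<open>ker X \<inter> ker Y\<close>, and
  rank-nullity turns this into \<open>dim (col X + col Y) + dim (row X + row Y) \<le> rk (X - Y) + 2 r\<close>,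
  i.e. the two subspace distances add up to at most \<open>2 d\<^sub>R(X, Y)\<close>. Conversely
  \<open>col (X - Y) \<subseteq> col X + col Y\<close> gives \<open>2 d\<^sub>R(X, Y) \<le> d\<^sub>S(col X, col Y) + 2 r\<close>, and likewise for
  rows; if \<open>|\<M>| = |\<N>|\<close> every pair of \<open>\<M>\<close> (or of \<open>\<N>\<close>) occurs among the codewords.\<close>

lemma col_space_eq_range:
  fixes A :: "'a::field^'n^'m"
  shows "col_space A = range ((*v) A)"
proof
  show "col_space A \<subseteq> range ((*v) A)"
    unfolding col_space_def
  proof (rule vec.span_minimal)
    have "column j A = A *v axis j 1" for j
      by (simp add: matrix_vector_mult_def column_def axis_def vec_eq_iff if_distrib cong: if_cong)
    then show "columns A \<subseteq> range ((*v) A)"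
      by (auto simp: columns_def)
    show "vec.subspace (range ((*v) A))"
      using vec.subspace_image[OF vec.subspace_UNIV] by blast
  qed
  show "range ((*v) A) \<subseteq> col_space A"
    using matrix_vector_mult_in_columnspace_gen by (auto simp: col_space_def)
qed

lemma row_space_eq_col_space_transpose: "row_space A = col_space (transpose A)"
  by (simp add: row_space_def col_space_def)

lemma subspace_col_space: "vec.subspace (col_space A)"
  by (simp add: col_space_def vec.subspace_span)

lemma subspace_row_space: "vec.subspace (row_space A)"
  by (simp add: row_space_def vec.subspace_span)

lemma dim_rows_le_dim_columns_gen:
  fixes A :: "'a::field^'n^'m"
  shows "vec.dim (rows A) \<le> vec.dim (columns A)"
proof -
  obtain B where B: "B \<subseteq> vec.span (columns A)" "vec.independent B"
      "vec.span (columns A) \<subseteq> vec.span B" "card B = vec.dim (vec.span (columns A))"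
    using vec.basis_exists by blast
  have fB: "finite B"
    using B(2) vec.finiteI_independent by blast
  have "\<exists>c. column j A = (\<Sum>b\<in>B. c b *s b)" for j
    using vec.span_finite[OF fB] vec.span_base[of "column j A" "columns A"] B(3)
    by (auto simp: columns_def)
  then obtain c where c: "\<And>j. column j A = (\<Sum>b\<in>B. c j b *s b)"
    by metis
  \<comment> \<open>the coefficient vectors of the columns span the row space\<close>
  define W where "W = (\<lambda>b. \<chi> j. c j b) ` B"
  have "rows A \<subseteq> vec.span W"
  proof
    fix x assume "x \<in> rows A"
    then obtain i where x: "x = row i A"
      by (auto simp: rows_def)
    have "A $ i $ j = (\<Sum>b\<in>B. c j b * b $ i)" for j
      using arg_cong[OF c[of j], of "\<lambda>v. v $ i"] by (simp add: column_def sum_component)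
    then have "x = (\<Sum>b\<in>B. (b $ i) *s (\<chi> j. c j b))"
      by (simp add: x row_def vec_eq_iff sum_component mult.commute)
    also have "\<dots> \<in> vec.span W"
      by (intro vec.span_sum vec.span_scale vec.span_base) (auto simp: W_def)
    finally show "x \<in> vec.span W" .
  qed
  then have "vec.dim (rows A) \<le> card W"
    using vec.dim_le_card fB W_def by blast
  also have "\<dots> \<le> card B"
    unfolding W_def using card_image_le fB by blast
  finally show ?thesis
    using B(4) by simp
qed

lemma column_rank_def_gen:
  fixes A :: "'a::field^'n^'m"
  shows "rank A = vec.dim (columns A)"
  using dim_rows_le_dim_columns_gen[of A] dim_rows_le_dim_columns_gen[of "transpose A"]
  by (simp add: row_rank_def_gen)

lemma rank_transpose_gen: "rank (transpose A) = rank A"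
  by (metis row_rank_def_gen column_rank_def_gen rows_transpose)

lemma rank_eq_dim_col_space: "rank A = vec.dim (col_space A)"
  by (simp add: col_space_def column_rank_def_gen)

lemma rank_eq_dim_row_space: "rank A = vec.dim (row_space A)"
  by (simp add: row_space_def row_rank_def_gen)

lemma rank_dim_range_gen: "rank A = vec.dim (range ((*v) A))"
  by (simp add: rank_eq_dim_col_space col_space_eq_range)

lemma dim_subspace_sum_Int:
  assumes "vec.subspace S" "vec.subspace T"
  shows "vec.dim (subspace_sum S T) + vec.dim (S \<inter> T) = vec.dim S + vec.dim T"
  using vec.dim_sums_Int[OF assms] by (simp add: subspace_sum_def)

lemma span_Un_eq_subspace_sum: "vec.span (A \<union> B) = subspace_sum (vec.span A) (vec.span B)"
  by (simp add: vec.span_Un subspace_sum_def)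

lemma exists_complement_subspace:
  assumes "vec.subspace K" "vec.subspace S" "K \<subseteq> S"
  obtains E :: "('a::field^'n) set"
  where "vec.subspace E" "E \<subseteq> S" "E \<inter> K \<subseteq> {0}" "subspace_sum E K = S"
proof -
  obtain B0 where B0: "B0 \<subseteq> K" "vec.independent B0" "K \<subseteq> vec.span B0"
    by (metis vec.basis_exists)
  have "B0 \<subseteq> S"
    using B0(1) assms(3) by blast
  then obtain B where B: "B0 \<subseteq> B" "B \<subseteq> S" "vec.independent B" "S \<subseteq> vec.span B"
    by (metis vec.maximal_independent_subset_extend B0(2))
  have span_B0: "vec.span B0 = K"
    using vec.span_minimal[OF B0(1) assms(1)] B0(3) by blast
  have span_B: "vec.span B = S"
    using vec.span_minimal[OF B(2) assms(2)] B(4) by blast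
  have fin_B: "finite B"
    using B(3) vec.finiteI_independent by blast
  define E where "E = vec.span (B - B0)"
  have E: "vec.subspace E"
    by (simp add: E_def vec.subspace_span)
  have E_sum: "subspace_sum E K = S"
  proof -
    have "(B - B0) \<union> B0 = B"
      using B(1) by blast
    then show ?thesis
      using span_Un_eq_subspace_sum[of "B - B0" B0] span_B span_B0 by (simp add: E_def)
  qed
  have "card B = card (B - B0) + card B0"
    using card_Diff_subset[OF finite_subset[OF B(1) fin_B] B(1)] card_mono[OF fin_B B(1)] by simp
  moreover have "vec.dim S + vec.dim (E \<inter> K) = vec.dim E + vec.dim K"
    using dim_subspace_sum_Int[OF E assms(1)] E_sum by simp
  moreover have "vec.dim E = card (B - B0)"
    unfolding E_def
    by (rule vec.dim_span_eq_card_independent) (use B(3) vec.independent_mono in blast)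
  moreover have "vec.dim S = card B" "vec.dim K = card B0"
    using vec.dim_span_eq_card_independent[OF B(3)] vec.dim_span_eq_card_independent[OF B0(2)]
      span_B span_B0 by simp_all
  ultimately have "vec.dim (E \<inter> K) = 0"
    by linarith
  then have "E \<inter> K \<subseteq> {0}"
    by (simp only: vec.dim_eq_0)
  moreover have "E \<subseteq> S"
    unfolding E_def using B(2) span_B vec.span_mono[of "B - B0" B] by blast
  ultimately show thesis
    using that E E_sum by blast
qed

lemma subspace_null_space: "vec.subspace {x. (A::'a::field^'n^'m) *v x = 0}"
  unfolding vec.subspace_def by (simp add: matrix_vector_right_distrib vec.scale)

lemma rank_nullity_subspace:
  fixes A :: "'a::field^'n^'m"
  assumes "vec.subspace S"
  shows "vec.dim S = vec.dim (S \<inter> {x. A *v x = 0}) + vec.dim ((*v) A ` S)"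
proof -
  let ?K = "S \<inter> {x. A *v x = 0}"
  have K: "vec.subspace ?K"
    using vec.subspace_inter[OF assms subspace_null_space[of A]] by simp
  then obtain E where E: "vec.subspace E" "E \<subseteq> S" "E \<inter> ?K \<subseteq> {0}" "subspace_sum E ?K = S"
    using exists_complement_subspace[OF K assms] by blast
  have "vec.dim (E \<inter> ?K) = 0"
    using E(3) vec.dim_eq_0 by blast
  moreover have "vec.dim S + vec.dim (E \<inter> ?K) = vec.dim E + vec.dim ?K"
    using dim_subspace_sum_Int[OF E(1) K] E(4) by simp
  ultimately have "vec.dim S = vec.dim E + vec.dim ?K"
    by linarith
  moreover have "inj_on ((*v) A) E"
    unfolding vec.inj_on_iff_eq_0[OF E(1)] using E(2,3) by blast
  then have "vec.dim ((*v) A ` E) = vec.dim E"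
    using vec.dim_image_eq[OF matrix_vector_mul_linear_gen, of A E]
      vec.span_eq_iff[THEN iffD2, OF E(1)]
    by simp
  moreover have "(*v) A ` S = (*v) A ` E"
  proof
    show "(*v) A ` S \<subseteq> (*v) A ` E"
    proof
      fix y assume "y \<in> (*v) A ` S"
      then obtain x where "y = A *v x" "x \<in> subspace_sum E ?K"
        using E(4) by blast
      then obtain e k where "y = A *v (e + k)" "e \<in> E" "A *v k = 0"
        by (auto simp: subspace_sum_def)
      then show "y \<in> (*v) A ` E"
        by (simp add: matrix_vector_right_distrib)
    qed
  qed (use E(2) in blast)
  ultimately show ?thesis
    by simp
qed

lemma rank_nullity_gen:
  fixes A :: "'a::field^'n^'m"
  shows "rank A + vec.dim {x. A *v x = 0} = CARD('n)"
  using rank_nullity_subspace[OF vec.subspace_UNIV, of A] rank_dim_range_gen[of A]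
  by (simp add: card_cart_basis)

lemma dim_common_null_space:
  fixes X Y :: "'a::field^'n^'m"
  shows "vec.dim {x. X *v x = 0 \<and> Y *v x = 0}
       + vec.dim (subspace_sum (row_space X) (row_space Y)) = CARD('n)"
proof -
  define Z :: "'a^'n^('m + 'm)" where "Z = (\<chi> i. case i of Inl j \<Rightarrow> X $ j | Inr j \<Rightarrow> Y $ j)"
  have "Z *v x = 0 \<longleftrightarrow> X *v x = 0 \<and> Y *v x = 0" for x
  proof -
    have "(Z *v x) $ Inl j = (X *v x) $ j" "(Z *v x) $ Inr j = (Y *v x) $ j" for j
      by (simp_all add: Z_def matrix_vector_mult_def)
    then show ?thesis
      unfolding vec_eq_iff by (metis sum.exhaust zero_index)
  qed
  moreover have "rows Z = rows X \<union> rows Y"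
  proof -
    have "row (Inl j) Z = row j X" "row (Inr j) Z = row j Y" for j
      by (simp_all add: Z_def row_def)
    then show ?thesis
      unfolding rows_def by (auto, metis sum.exhaust) (metis)+
  qed
  then have "rank Z = vec.dim (subspace_sum (row_space X) (row_space Y))"
    by (metis row_rank_def_gen span_Un_eq_subspace_sum row_space_def vec.dim_span)
  ultimately show ?thesis
    using rank_nullity_gen[of Z] by simp
qed

lemma col_space_mult_subset: "col_space (A ** B) \<subseteq> col_space A"
  by (auto simp: col_space_eq_range matrix_vector_mul_assoc[symmetric])

lemma row_space_mult_subset: "row_space (A ** B) \<subseteq> row_space B"
  by (metis row_space_eq_col_space_transpose matrix_transpose_mul col_space_mult_subset)

lemma rank_diff_le_dim_col_space_sum:
  fixes X Y :: "'a::field^'n^'m"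
  shows "rank (X - Y) \<le> vec.dim (subspace_sum (col_space X) (col_space Y))"
proof -
  have "(X - Y) *v x = X *v x + Y *v (- x)" for x
    using matrix_vector_mult_diff_distrib[of Y 0 x]
    by (simp add: matrix_vector_mult_diff_rdistrib)
  then have "col_space (X - Y) \<subseteq> subspace_sum (col_space X) (col_space Y)"
    by (auto simp: col_space_eq_range subspace_sum_def)
  then show ?thesis
    unfolding rank_eq_dim_col_space by (rule vec.dim_subset)
qed

lemma rank_diff_le_dim_row_space_sum:
  fixes X Y :: "'a::field^'n^'m"
  shows "rank (X - Y) \<le> vec.dim (subspace_sum (row_space X) (row_space Y))"
proof -
  have "transpose X - transpose Y = transpose (X - Y)"
    by (simp add: transpose_def vec_eq_iff)
  then show ?thesis
    using rank_diff_le_dim_col_space_sum[of "transpose X" "transpose Y"]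
    by (simp add: rank_transpose_gen row_space_eq_col_space_transpose)
qed

lemma dim_space_sums_le_rank_diff:
  fixes X Y :: "'a::field^'n^'m"
  assumes "rank X = r" "rank Y = r"
  shows "vec.dim (subspace_sum (col_space X) (col_space Y))
       + vec.dim (subspace_sum (row_space X) (row_space Y)) \<le> rank (X - Y) + 2 * r"
proof -
  let ?N = "{x. (X - Y) *v x = 0}"
  \<comment> \<open>X maps the null space of X - Y into the intersection of the column spaces,
    with kernel the common null space of X and Y\<close>
  have "?N \<inter> {x. X *v x = 0} = {x. X *v x = 0 \<and> Y *v x = 0}"
    by (auto simp: matrix_vector_mult_diff_rdistrib)
  then have "vec.dim ?N = vec.dim {x. X *v x = 0 \<and> Y *v x = 0} + vec.dim ((*v) X ` ?N)"
    using rank_nullity_subspace[OF subspace_null_space, of "X - Y" X] by simp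
  moreover have "(*v) X ` ?N \<subseteq> col_space X \<inter> col_space Y"
  proof
    fix z assume "z \<in> (*v) X ` ?N"
    then obtain x where "z = X *v x" "X *v x = Y *v x"
      by (auto simp: matrix_vector_mult_diff_rdistrib)
    then show "z \<in> col_space X \<inter> col_space Y"
      unfolding col_space_eq_range by (metis IntI rangeI)
  qed
  then have "vec.dim ((*v) X ` ?N) \<le> vec.dim (col_space X \<inter> col_space Y)"
    by (rule vec.dim_subset)
  moreover have "vec.dim (subspace_sum (col_space X) (col_space Y))
      + vec.dim (col_space X \<inter> col_space Y) = 2 * r"
    using dim_subspace_sum_Int[OF subspace_col_space subspace_col_space, of X Y] assms
    by (simp add: rank_eq_dim_col_space)
  ultimately show ?thesis
    using rank_nullity_gen[of "X - Y"] dim_common_null_space[of X Y] by linarith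
qed

lemma subspace_dist_eq:
  assumes "vec.subspace U" "vec.subspace V" "vec.dim U = r" "vec.dim V = r"
  shows "subspace_dist U V + 2 * r = 2 * vec.dim (subspace_sum U V)"
proof -
  have "U \<inter> V \<subseteq> subspace_sum U V"
    unfolding subspace_sum_def using vec.subspace_0[OF assms(2)] by force
  then have "vec.dim (U \<inter> V) \<le> vec.dim (subspace_sum U V)"
    by (rule vec.dim_subset)
  then show ?thesis
    using dim_subspace_sum_Int[OF assms(1,2)] assms(3,4) unfolding subspace_dist_def by linarith
qed

lemma subspace_dist_col_row_space_eq:
  fixes X Y :: "'a::field^'n^'m"
  assumes "rank X = r" "rank Y = r"
  shows "subspace_dist (col_space X) (col_space Y) + 2 * r
           = 2 * vec.dim (subspace_sum (col_space X) (col_space Y))"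
    and "subspace_dist (row_space X) (row_space Y) + 2 * r
           = 2 * vec.dim (subspace_sum (row_space X) (row_space Y))"
  using subspace_dist_eq[OF subspace_col_space subspace_col_space
      assms[unfolded rank_eq_dim_col_space]]
    subspace_dist_eq[OF subspace_row_space subspace_row_space
      assms[unfolded rank_eq_dim_row_space]]
  by simp_all

lemma subspace_dists_le_rank_dist:
  fixes X Y :: "'a::field^'n^'m"
  assumes "rank X = r" "rank Y = r"
  shows "subspace_dist (col_space X) (col_space Y) + subspace_dist (row_space X) (row_space Y)
           \<le> 2 * rank_dist X Y"
  using dim_space_sums_le_rank_diff[OF assms] subspace_dist_col_row_space_eq[OF assms]
  unfolding rank_dist_def by linarith

lemma rank_dist_le_subspace_dist:
  fixes X Y :: "'a::field^'n^'m"
  assumes "rank X = r" "rank Y = r"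
  shows "2 * rank_dist X Y \<le> subspace_dist (col_space X) (col_space Y) + 2 * r"
    and "2 * rank_dist X Y \<le> subspace_dist (row_space X) (row_space Y) + 2 * r"
  using subspace_dist_col_row_space_eq[OF assms] rank_diff_le_dim_col_space_sum[of X Y]
    rank_diff_le_dim_row_space_sum[of X Y]
  unfolding rank_dist_def by linarith+

definition matrix_of_columns :: "'n set \<Rightarrow> ('n \<Rightarrow> 'a::zero^'m) \<Rightarrow> 'a^'n^'m" where
  "matrix_of_columns I f = (\<chi> k j. if j \<in> I then f j $ k else 0)"

lemma column_matrix_of_columns:
  "column j (matrix_of_columns I f) = (if j \<in> I then f j else 0)"
  by (simp add: column_def matrix_of_columns_def vec_eq_iff)

lemma matrix_of_columns_mult:
  "matrix_of_columns I f *v y = (\<Sum>j\<in>I. y $ j *s (f j :: 'a::field^'m))"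
proof -
  have "matrix_of_columns I f *v y = (\<Sum>j\<in>UNIV. if j \<in> I then y $ j *s f j else 0)"
    unfolding matrix_mult_sum by (intro sum.cong refl) (simp add: column_matrix_of_columns)
  then show ?thesis
    by (simp add: sum.If_cases)
qed

lemma col_space_matrix_of_columns:
  "col_space (matrix_of_columns I f) = vec.span (f ` I :: ('a::field^'m) set)"
proof -
  have "f ` I \<subseteq> columns (matrix_of_columns I f)"
    by (force simp: columns_def column_matrix_of_columns)
  moreover have "columns (matrix_of_columns I f) \<subseteq> insert 0 (f ` I)"
    by (auto simp: columns_def column_matrix_of_columns)
  ultimately show ?thesis
    unfolding col_space_def
    by (metis vec.span_insert_0 vec.span_mono vec.span_span subset_antisym)
qed

lemma inj_on_matrix_of_columns:
  fixes f :: "'n::finite \<Rightarrow> 'a::field^'m"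
  assumes "inj_on f I" "vec.independent (f ` I)"
  shows "inj_on ((*v) (matrix_of_columns I f)) {y. \<forall>j. j \<notin> I \<longrightarrow> y $ j = 0}"
proof -
  have supp: "vec.subspace {y :: 'a^'n. \<forall>j. j \<notin> I \<longrightarrow> y $ j = 0}"
    by (auto simp: vec.subspace_def)
  have "y = 0" if "\<forall>j. j \<notin> I \<longrightarrow> y $ j = 0" "matrix_of_columns I f *v y = 0" for y
  proof -
    let ?c = "\<lambda>b. y $ the_inv_into I f b"
    have "(\<Sum>b\<in>f ` I. ?c b *s b) = (\<Sum>j\<in>I. y $ j *s f j)"
      using assms(1) by (simp add: sum.reindex the_inv_into_f_f)
    then have sum0: "(\<Sum>b\<in>f ` I. ?c b *s b) = 0"
      using that(2) by (simp add: matrix_of_columns_mult)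
    have "?c b = 0" if "b \<in> f ` I" for b
      by (rule vec.independentD[OF assms(2) _ order.refl sum0 that]) simp
    then have "\<forall>j\<in>I. y $ j = 0"
      by (metis assms(1) imageI the_inv_into_f_f)
    with that(1) show "y = 0"
      by (auto simp: vec_eq_iff)
  qed
  then show ?thesis
    unfolding vec.inj_on_iff_eq_0[OF supp] by blast
qed

lemma exists_matrix_col_row_space:
  fixes U :: "('a::field^'m) set" and V :: "('a^'n) set"
  assumes U: "vec.subspace U" "vec.dim U = r" and V: "vec.subspace V" "vec.dim V = r"
    and "r \<le> CARD('n)"
  obtains X :: "'a^'n^'m" where "rank X = r" "col_space X = U" "row_space X = V"
proof -
  obtain I :: "'n set" where I: "card I = r"
    using obtain_subset_with_card_n[OF assms(5)] by metis
  obtain BU where BU: "vec.independent BU" "vec.span BU = U" "card BU = r"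
    using vec.basis_exists[of U] U vec.span_subspace by metis
  obtain BV where BV: "vec.independent BV" "vec.span BV = V" "card BV = r"
    using vec.basis_exists[of V] V vec.span_subspace by metis
  obtain fu where fu: "bij_betw fu I BU"
    using finite_same_card_bij[of I BU] I BU(1,3) vec.finiteI_independent by auto
  obtain fv where fv: "bij_betw fv I BV"
    using finite_same_card_bij[of I BV] I BV(1,3) vec.finiteI_independent by auto
  define C where "C = matrix_of_columns I fu"
  define R where "R = transpose (matrix_of_columns I fv)"
  define X where "X = C ** R"
  have col_C: "col_space C = U" and row_R: "row_space R = V"
    using fu fv BU(2) BV(2)
    by (simp_all add: C_def R_def col_space_matrix_of_columns row_space_eq_col_space_transpose
        bij_betw_def)
  have "col_space R \<subseteq> {y. \<forall>j. j \<notin> I \<longrightarrow> y $ j = 0}"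
    by (auto simp: col_space_eq_range R_def matrix_vector_mult_def transpose_def
        matrix_of_columns_def)
  then have "inj_on ((*v) C) (col_space R)"
    using inj_on_matrix_of_columns[of fu I] fu BU(1) inj_on_subset
    by (auto simp: C_def bij_betw_def)
  then have "vec.dim ((*v) C ` col_space R) = vec.dim (col_space R)"
    using vec.dim_image_eq[OF matrix_vector_mul_linear_gen, of C "col_space R"]
      vec.span_eq_iff[THEN iffD2, OF subspace_col_space[of R]]
    by simp
  moreover have "(*v) C ` col_space R = col_space X"
    by (auto simp: col_space_eq_range X_def matrix_vector_mul_assoc[symmetric] image_image)
  ultimately have rank_X: "rank X = r"
    using V(2) row_R rank_eq_dim_col_space[of R] rank_eq_dim_row_space[of R]
    by (simp add: rank_eq_dim_col_space)
  have "col_space X = U"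
  proof (rule vec.subspace_dim_equal[OF subspace_col_space U(1)])
    show "col_space X \<subseteq> U"
      using col_space_mult_subset[of C R] col_C by (simp add: X_def)
  qed (use rank_X U(2) rank_eq_dim_col_space[of X] in simp)
  moreover have "row_space X = V"
  proof (rule vec.subspace_dim_equal[OF subspace_row_space V(1)])
    show "row_space X \<subseteq> V"
      using row_space_mult_subset[of C R] row_R by (simp add: X_def)
  qed (use rank_X V(2) rank_eq_dim_row_space[of X] in simp)
  ultimately show thesis
    using that rank_X by blast
qed

lemma min_dist_le: "x \<in> S \<Longrightarrow> y \<in> S \<Longrightarrow> x \<noteq> y \<Longrightarrow> min_dist d S \<le> enat (d x y)"
  unfolding min_dist_def by (rule INF_lower2[of "(x, y)"]) auto

lemma le_min_dist_iff: "b \<le> min_dist d S \<longleftrightarrow> (\<forall>x\<in>S. \<forall>y\<in>S. x \<noteq> y \<longrightarrow> b \<le> enat (d x y))"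
  by (auto simp: min_dist_def le_INF_iff)

lemma min_dist_cases:
  obtains "min_dist d S = \<infinity>"
  | x y where "x \<in> S" "y \<in> S" "x \<noteq> y" "min_dist d S = enat (d x y)"
proof -
  let ?D = "(\<lambda>p. enat (d (fst p) (snd p))) ` {(x, y). x \<in> S \<and> y \<in> S \<and> x \<noteq> y}"
  show thesis
  proof (cases "?D = {}")
    case True
    have "min_dist d S = \<infinity>"
      unfolding min_dist_def True by (simp add: top_enat_def)
    then show thesis
      by (rule that(1))
  next
    case False
    \<comment> \<open>enat is well-ordered, so a nonempty infimum is a least element\<close>
    then obtain z where "z \<in> ?D"
      by blast
    then have "Inf ?D \<in> ?D"
      unfolding Inf_enat_def if_not_P[OF False] by (rule LeastI)
    then show thesis
      using that(2) by (auto simp: min_dist_def)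
  qed
qed

lemma min_dist_mono:
  assumes "\<forall>x\<in>S. \<forall>y\<in>S. x \<noteq> y \<longrightarrow> d x y \<le> e x y"
  shows "min_dist d S \<le> min_dist e S"
  using assms by (auto simp: le_min_dist_iff intro: order_trans[OF min_dist_le])

lemma min_dist_antimono: "S \<subseteq> T \<Longrightarrow> min_dist d T \<le> min_dist d S"
  by (auto simp: le_min_dist_iff intro: min_dist_le)

lemma min_dist_image:
  assumes "inj_on f S"
  shows "min_dist d (f ` S) = min_dist (\<lambda>x y. d (f x) (f y)) S"
proof (rule antisym)
  show "min_dist d (f ` S) \<le> min_dist (\<lambda>x y. d (f x) (f y)) S"
    using assms by (auto simp: le_min_dist_iff inj_on_eq_iff intro!: min_dist_le)
  show "min_dist (\<lambda>x y. d (f x) (f y)) S \<le> min_dist d (f ` S)"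
    by (auto simp: le_min_dist_iff intro: min_dist_le)
qed

lemma min_dist_add:
  "min_dist d S + min_dist e S \<le> min_dist (\<lambda>x y. d x y + e x y) S"
  unfolding le_min_dist_iff
proof (intro ballI impI)
  fix x y assume "x \<in> S" "y \<in> S" "x \<noteq> y"
  then have "min_dist d S + min_dist e S \<le> enat (d x y) + enat (e x y)"
    by (intro add_mono min_dist_le)
  then show "min_dist d S + min_dist e S \<le> enat (d x y + e x y)"
    by simp
qed

lemma min_dist_mult:
  assumes "0 < k"
  shows "min_dist (\<lambda>x y. k * d x y) S = enat k * min_dist d S"
proof (rule antisym)
  show "min_dist (\<lambda>x y. k * d x y) S \<le> enat k * min_dist d S"
    using assms by (cases d S rule: min_dist_cases) (auto intro: min_dist_le)
  show "enat k * min_dist d S \<le> min_dist (\<lambda>x y. k * d x y) S"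
    unfolding le_min_dist_iff
  proof (intro ballI impI)
    fix x y assume "x \<in> S" "y \<in> S" "x \<noteq> y"
    then have "enat k * min_dist d S \<le> enat k * enat (d x y)"
      by (intro mult_left_mono min_dist_le) simp_all
    then show "enat k * min_dist d S \<le> enat (k * d x y)"
      by simp
  qed
qed

lemma min_dist_add_const: "min_dist (\<lambda>x y. d x y + c) S \<le> min_dist d S + enat c"
  by (cases d S rule: min_dist_cases) (auto intro: min_dist_le)

lemma subspace_dists_le_min_rank_dist:
  fixes C :: "('a::field^'n^'m) set"
  assumes "\<forall>X\<in>C. rank X = r" "inj_on col_space C" "inj_on row_space C"
  shows "min_subspace_dist (col_space ` C) + min_subspace_dist (row_space ` C)
           \<le> 2 * min_rank_dist C"
proof -
  have "min_subspace_dist (col_space ` C) + min_subspace_dist (row_space ` C)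
      = min_dist (\<lambda>X Y. subspace_dist (col_space X) (col_space Y)) C
        + min_dist (\<lambda>X Y. subspace_dist (row_space X) (row_space Y)) C"
    using assms(2,3) by (simp add: min_subspace_dist_def min_dist_image)
  also have "\<dots> \<le> min_dist (\<lambda>X Y. subspace_dist (col_space X) (col_space Y)
                                + subspace_dist (row_space X) (row_space Y)) C"
    by (rule min_dist_add)
  also have "\<dots> \<le> min_dist (\<lambda>X Y. 2 * rank_dist X Y) C"
    using assms(1) subspace_dists_le_rank_dist by (blast intro: min_dist_mono)
  also have "\<dots> = 2 * min_rank_dist C"
    by (simp add: min_rank_dist_def min_dist_mult numeral_eq_enat)
  finally show ?thesis .
qed

lemma min_rank_dist_le_min_subspace_dist:
  fixes C :: "('a::field^'n^'m) set"
  assumes "\<forall>X\<in>C. rank X = r"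
  shows "inj_on col_space C \<Longrightarrow>
           2 * min_rank_dist C \<le> min_subspace_dist (col_space ` C) + 2 * enat r"
    and "inj_on row_space C \<Longrightarrow>
           2 * min_rank_dist C \<le> min_subspace_dist (row_space ` C) + 2 * enat r"
proof -
  have twice: "2 * min_rank_dist C = min_dist (\<lambda>X Y. 2 * rank_dist X Y) C"
    by (simp add: min_rank_dist_def min_dist_mult numeral_eq_enat)
  show "2 * min_rank_dist C \<le> min_subspace_dist (col_space ` C) + 2 * enat r"
    if "inj_on col_space C"
  proof -
    have "min_dist (\<lambda>X Y. 2 * rank_dist X Y) C
        \<le> min_dist (\<lambda>X Y. subspace_dist (col_space X) (col_space Y) + 2 * r) C"
      using assms rank_dist_le_subspace_dist(1) by (blast intro: min_dist_mono)
    also have "\<dots> \<le> min_dist (\<lambda>X Y. subspace_dist (col_space X) (col_space Y)) C + enat (2 * r)"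
      by (rule min_dist_add_const)
    finally show ?thesis
      using that twice by (simp add: min_subspace_dist_def min_dist_image numeral_eq_enat)
  qed
  show "2 * min_rank_dist C \<le> min_subspace_dist (row_space ` C) + 2 * enat r"
    if "inj_on row_space C"
  proof -
    have "min_dist (\<lambda>X Y. 2 * rank_dist X Y) C
        \<le> min_dist (\<lambda>X Y. subspace_dist (row_space X) (row_space Y) + 2 * r) C"
      using assms rank_dist_le_subspace_dist(2) by (blast intro: min_dist_mono)
    also have "\<dots> \<le> min_dist (\<lambda>X Y. subspace_dist (row_space X) (row_space Y)) C + enat (2 * r)"
      by (rule min_dist_add_const)
    finally show ?thesis
      using that twice by (simp add: min_subspace_dist_def min_dist_image numeral_eq_enat)
  qed
qed

lemma exists_constant_rank_code:
  fixes \<M> :: "('a::field^'m) set set" and \<N> :: "('a^'n) set set"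
  assumes "\<forall>U\<in>\<M>. vec.subspace U \<and> vec.dim U = r" "\<forall>V\<in>\<N>. vec.subspace V \<and> vec.dim V = r"
    and "r \<le> CARD('n)" and "bij_betw f \<M> \<N>"
  obtains \<C> :: "('a^'n^'m) set"
  where "\<forall>X\<in>\<C>. rank X = r" "bij_betw col_space \<C> \<M>" "\<forall>X\<in>\<C>. row_space X = f (col_space X)"
proof -
  let ?P = "\<lambda>U X. rank X = r \<and> col_space X = U \<and> row_space X = f U"
  have ex: "\<exists>X :: 'a^'n^'m. ?P U X" if U: "U \<in> \<M>" for U
  proof -
    have "f U \<in> \<N>"
      using assms(4) U by (rule bij_betw_apply)
    obtain X :: "'a^'n^'m" where "rank X = r" "col_space X = U" "row_space X = f U"
      by (rule exists_matrix_col_row_space[of U r "f U"])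
        (use assms(1-3) U \<open>f U \<in> \<N>\<close> in auto)
    then show ?thesis
      by blast
  qed
  define g where "g U = (SOME X. ?P U X)" for U
  have g: "rank (g U) = r" "col_space (g U) = U" "row_space (g U) = f U" if "U \<in> \<M>" for U
    using someI_ex[OF ex[OF that]] by (simp_all add: g_def)
  have "\<forall>X\<in>g ` \<M>. rank X = r"
    by (auto simp: g)
  moreover have "bij_betw col_space (g ` \<M>) \<M>"
    by (rule bij_betw_byWitness[of _ g]) (auto simp: g)
  moreover have "\<forall>X\<in>g ` \<M>. row_space X = f (col_space X)"
    by (auto simp: g)
  ultimately show thesis
    by (rule that)
qed

lemma obtain_bij_betw_subsets:
  assumes "finite A" "finite B"
  obtains A' B' f where "A' \<subseteq> A" "B' \<subseteq> B" "card A' = min (card A) (card B)" "bij_betw f A' B'"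
    "card A = card B \<Longrightarrow> A' = A \<and> B' = B"
proof -
  obtain A' where A': "A' \<subseteq> A" "card A' = min (card A) (card B)" "finite A'"
    by (rule obtain_subset_with_card_n[OF min.cobounded1])
  obtain B' where B': "B' \<subseteq> B" "card B' = min (card A) (card B)" "finite B'"
    by (rule obtain_subset_with_card_n[OF min.cobounded2])
  obtain f where "bij_betw f A' B'"
    using finite_same_card_bij[OF A'(3) B'(3)] A'(2) B'(2) by auto
  moreover have "A' = A \<and> B' = B" if "card A = card B"
    using card_subset_eq[OF assms(1) A'(1)] card_subset_eq[OF assms(2) B'(1)] A'(2) B'(2) that
    by simp
  ultimately show thesis
    by (rule that[OF A'(1) B'(1) A'(2)])
qed

theorem proposition2:
  fixes \<M> :: "('a::{finite,field}^'m) set set"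
    and \<N> :: "('a^'n) set set"
    and r :: nat
  assumes "CARD('n) \<le> CARD('m)"
    and "r \<le> min CARD('n) CARD('m)"
    and "\<forall>U\<in>\<M>. vec.subspace U \<and> vec.dim U = r"
    and "\<forall>V\<in>\<N>. vec.subspace V \<and> vec.dim V = r"
  shows "\<exists>\<C> :: ('a^'n^'m) set.
           (\<forall>X\<in>\<C>. rank X = r) \<and>
           card \<C> = min (card \<M>) (card \<N>) \<and>
           (\<forall>X\<in>\<C>. col_space X \<in> \<M> \<and> row_space X \<in> \<N>) \<and>
           2 * min_rank_dist \<C> \<ge> min_subspace_dist \<M> + min_subspace_dist \<N> \<and>
           (card \<M> = card \<N> \<longrightarrow>
              2 * min_rank_dist \<C> \<le> min (min_subspace_dist \<M>) (min_subspace_dist \<N>) + 2 * enat r)"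
proof -
  obtain \<M>' \<N>' f where sub: "\<M>' \<subseteq> \<M>" "\<N>' \<subseteq> \<N>" and card: "card \<M>' = min (card \<M>) (card \<N>)"
      and f: "bij_betw f \<M>' \<N>'" and eq: "card \<M> = card \<N> \<Longrightarrow> \<M>' = \<M> \<and> \<N>' = \<N>"
    by (rule obtain_bij_betw_subsets[of \<M> \<N>, OF finite finite]) blast
  obtain \<C> :: "('a^'n^'m) set" where rank: "\<forall>X\<in>\<C>. rank X = r"
      and col: "bij_betw col_space \<C> \<M>'" and row: "\<forall>X\<in>\<C>. row_space X = f (col_space X)"
    by (rule exists_constant_rank_code[of \<M>' r \<N>' f]) (use assms(2-4) sub f in auto)
  have inj_col: "inj_on col_space \<C>" and col_image: "col_space ` \<C> = \<M>'"
    using col by (simp_all add: bij_betw_def)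
  have inj_row: "inj_on row_space \<C>" and row_image: "row_space ` \<C> = \<N>'"
    using row col f by (auto simp: bij_betw_def inj_on_def image_image cong: image_cong)
  have "min_subspace_dist \<M> + min_subspace_dist \<N>
      \<le> min_subspace_dist (col_space ` \<C>) + min_subspace_dist (row_space ` \<C>)"
    unfolding min_subspace_dist_def col_image row_image using sub by (intro add_mono min_dist_antimono)
  also have "\<dots> \<le> 2 * min_rank_dist \<C>"
    by (rule subspace_dists_le_min_rank_dist[OF rank inj_col inj_row])
  finally have lower: "min_subspace_dist \<M> + min_subspace_dist \<N> \<le> 2 * min_rank_dist \<C>" .
  have upper: "2 * min_rank_dist \<C> \<le> min (min_subspace_dist \<M>) (min_subspace_dist \<N>) + 2 * enat r"
    if "card \<M> = card \<N>"
    using min_rank_dist_le_min_subspace_dist[OF rank] inj_col inj_row col_image row_image eq[OF that]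
    by (simp add: min_def)
  have "card \<C> = min (card \<M>) (card \<N>)"
    using bij_betw_same_card[OF col] card by simp
  moreover have "\<forall>X\<in>\<C>. col_space X \<in> \<M> \<and> row_space X \<in> \<N>"
    using col_image row_image sub by blast
  ultimately show ?thesis
    using rank lower upper by blast
qed

end
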